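(* If $\beta$ is a real quadratic irrational of conductor $f$, then there exist an integer matrix $B$ with $\det B=f$ and a real quadratic irrational $\alpha$ of conductor $1$ such that $\beta=B\cdot\alpha$.
   Context: For an integer matrix $B=\begin{pmatrix}a&b\\c&d\end{pmatrix}$, $B\cdot\alpha=\frac{a\alpha+b}{c\alpha+d}$. If $\beta$ is a root of $a\beta^2+b\beta+c=0$ with $a,b,c\in\mathbb Z$, $\gcd(a,b,c)=1$, and $b^2-4ac=f^2\Delta_0$ with $\Delta_0$ a fundamental discriminant and $f$ a positive integer, then $f$ is the conductor of $\beta$. *)

theory Defs
  imports Complex_Main "HOL-Computational_Algebra.Squarefree"
begin

definition fundamental_discriminant :: "int \<Rightarrow> bool" where
  "fundamental_discriminant D \<longleftrightarrow>
     (D mod 4 = 1 \<and> squarefree D) \<or>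
     (\<exists>m. D = 4 * m \<and> (m mod 4 = 2 \<or> m mod 4 = 3) \<and> squarefree m)"

definition real_quadratic_irrational :: "real \<Rightarrow> bool" where
  "real_quadratic_irrational x \<longleftrightarrow> x \<notin> \<rat> \<and>
     (\<exists>a b c :: int. a \<noteq> 0 \<and> of_int a * x ^ 2 + of_int b * x + of_int c = 0)"

definition conductor :: "real \<Rightarrow> int \<Rightarrow> bool" where
  "conductor x f \<longleftrightarrow> f > 0 \<and>
     (\<exists>a b c D0 :: int. a \<noteq> 0 \<and> gcd a (gcd b c) = 1 \<and>
        of_int a * x ^ 2 + of_int b * x + of_int c = 0 \<and>
        b ^ 2 - 4 * a * c = f ^ 2 * D0 \<and> fundamental_discriminant D0)"

definition mat_act :: "int \<Rightarrow> int \<Rightarrow> int \<Rightarrow> int \<Rightarrow> real \<Rightarrow> real" where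
  "mat_act a b c d x = (of_int a * x + of_int b) / (of_int c * x + of_int d)"

end

theory Submission
  imports Defs
begin

text \<open>Induction on the conductor. Let x be a root of the primitive form (a, b, c) whose
  discriminant is p^2 E for a prime p. If p does not divide a, choose k with p | 2ak + b and
  p^2 | ak^2 + bk + c (for p = 2 this needs E = 0, 1 mod 4); substituting x = p x' + k turns
  the form into p^2 times a primitive form with discriminant E. If p divides a, then p does
  not divide c, and the substitution x = -1/x' swaps a and c first. Either way x is the image
  of x' under a matrix of determinant p, and composing these matrices gives determinant f.\<close>

definition primitive_quadratic_root :: "real \<Rightarrow> int \<Rightarrow> bool" where
  "primitive_quadratic_root x \<Delta> \<longleftrightarrow> (\<exists>a b c :: int. a \<noteq> 0 \<and> gcd a (gcd b c) = 1 \<and>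
     of_int a * x ^ 2 + of_int b * x + of_int c = 0 \<and> b ^ 2 - 4 * a * c = \<Delta>)"

lemma conductor_iff_primitive_quadratic_root:
  "conductor x f \<longleftrightarrow>
     f > 0 \<and> (\<exists>D0. fundamental_discriminant D0 \<and> primitive_quadratic_root x (f ^ 2 * D0))"
  unfolding conductor_def primitive_quadratic_root_def by meson

lemma real_quadratic_irrational_if_primitive_quadratic_root:
  "x \<notin> \<rat> \<Longrightarrow> primitive_quadratic_root x \<Delta> \<Longrightarrow> real_quadratic_irrational x"
  unfolding real_quadratic_irrational_def primitive_quadratic_root_def by meson

lemma fundamental_discriminant_mod_4:
  "fundamental_discriminant D \<Longrightarrow> D mod 4 = 0 \<or> D mod 4 = 1"
  unfolding fundamental_discriminant_def by auto

lemma square_mult_mod_4: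
  fixes m D :: int
  assumes "D mod 4 = 0 \<or> D mod 4 = 1"
  shows "(m ^ 2 * D) mod 4 = 0 \<or> (m ^ 2 * D) mod 4 = 1"
proof -
  have "(m ^ 2 * D) mod 4 = (((m mod 4) ^ 2 mod 4) * (D mod 4)) mod 4"
    by (metis mod_mult_eq power_mod)
  moreover have "m mod 4 \<in> {0, 1, 2, 3}" by auto
  ultimately show ?thesis using assms by auto
qed

lemma mat_act_rational: "y \<in> \<rat> \<Longrightarrow> mat_act a b c d y \<in> \<rat>"
  unfolding mat_act_def by simp

lemma mat_act_denominator_nonzero:
  assumes "y \<notin> \<rat>" and "c \<noteq> 0 \<or> d \<noteq> 0"
  shows "of_int c * y + of_int d \<noteq> 0"
proof
  assume zero: "of_int c * y + of_int d = 0"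
  with assms(2) have "c \<noteq> 0" by auto
  with zero have "y = - of_int d / of_int c"
    by (simp add: field_simps eq_neg_iff_add_eq_0 add.commute)
  with assms(1) show False by simp
qed

lemma mat_act_mult:
  assumes "of_int c' * y + of_int d' \<noteq> 0"
  shows "mat_act a b c d (mat_act a' b' c' d' y) =
    mat_act (a * a' + b * c') (a * b' + b * d') (c * a' + d * c') (c * b' + d * d') y"
proof -
  let ?v = "of_int c' * y + of_int d' :: real" and ?u = "of_int a' * y + of_int b' :: real"
  have "mat_act a b c d (?u / ?v) =
      ((of_int a * ?u + of_int b * ?v) / ?v) / ((of_int c * ?u + of_int d * ?v) / ?v)"
    unfolding mat_act_def using assms by (simp add: field_simps)
  also have "\<dots> = (of_int a * ?u + of_int b * ?v) / (of_int c * ?u + of_int d * ?v)"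
    using assms by simp
  finally show ?thesis by (simp add: mat_act_def algebra_simps)
qed

lemma reducing_shift_odd_prime:
  fixes a b c p E :: int
  assumes p: "prime p" "p \<noteq> 2" and not_dvd: "\<not> p dvd a"
    and disc: "b ^ 2 - 4 * a * c = p ^ 2 * E"
  shows "\<exists>k. p dvd 2 * a * k + b \<and> p ^ 2 dvd a * k ^ 2 + b * k + c"
proof -
  have "\<not> p dvd 2" using p primes_dvd_imp_eq[of p 2] by auto
  then have "coprime p 2" and "coprime p a"
    using prime_imp_coprime[OF p(1)] not_dvd by blast+
  then have coprime_2a: "coprime p (2 * a)" by simp
  have coprime_4a: "coprime p (4 * a)"
    using coprime_mult_right_iff[of p 2 "2 * a"] \<open>coprime p 2\<close> coprime_2a by simp
  from coprime_2a obtain u v where uv: "u * (2 * a) + v * p = 1"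
    by (metis bezout_int coprime_iff_gcd_eq_1 gcd.commute)
  define k where "k = - b * u"
  have shift: "2 * a * k + b = p * (b * v)"
    using uv unfolding k_def by algebra
  have "4 * a * (a * k ^ 2 + b * k + c) = (2 * a * k + b) ^ 2 - (b ^ 2 - 4 * a * c)"
    by algebra
  also have "\<dots> = p ^ 2 * ((b * v) ^ 2 - E)"
    unfolding shift disc by (simp add: power_mult_distrib algebra_simps)
  finally have "p ^ 2 dvd (4 * a) * (a * k ^ 2 + b * k + c)" by simp
  moreover have "coprime (p ^ 2) (4 * a)" using coprime_4a by simp
  ultimately have "p ^ 2 dvd a * k ^ 2 + b * k + c"
    using coprime_dvd_mult_right_iff by blast
  with shift show ?thesis by (intro exI[of _ k]) simp
qed

lemma reducing_shift_two:
  fixes a b c E :: int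
  assumes odd: "odd a" and disc: "b ^ 2 - 4 * a * c = 2 ^ 2 * E"
    and E: "E mod 4 = 0 \<or> E mod 4 = 1"
  shows "\<exists>k. 2 dvd 2 * a * k + b \<and> 2 ^ 2 dvd a * k ^ 2 + b * k + c"
proof -
  have "b ^ 2 = 2 * (2 * a * c + 2 * E)" using disc by (simp add: algebra_simps)
  then have "even (b ^ 2)" by simp
  then obtain b' where b': "b = 2 * b'" by auto
  obtain x where x: "a = 2 * x + 1" using odd by (metis oddE)
  define t :: int where "t = (if E mod 4 = 0 then 0 else 1)"
  define k where "k = t - a * b'"
  have "4 dvd (a * t) ^ 2 - E"
  proof (cases "E mod 4 = 0")
    case True
    then show ?thesis unfolding t_def by simp presburger
  next
    case False
    with E have "E mod 4 = 1" by simp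
    moreover have "(a * t) ^ 2 - E = 4 * (x * (x + 1)) + (1 - E)"
      using False unfolding t_def x by (simp add: power2_eq_square algebra_simps)
    ultimately show ?thesis by presburger
  qed
  moreover have "(a * k + b') ^ 2 - E =
      ((a * t) ^ 2 - E) + 4 * (4 * (b' * x * (x + 1)) ^ 2 - 2 * a * t * (b' * x * (x + 1)))"
    unfolding k_def x by (simp add: power2_eq_square algebra_simps)
  moreover have "a * (a * k ^ 2 + b * k + c) = (a * k + b') ^ 2 - E"
    using disc b' by (simp add: power2_eq_square algebra_simps)
  ultimately have "4 dvd a * (a * k ^ 2 + b * k + c)" by (metis dvd_add dvd_triv_left)
  moreover have "coprime 4 a"
    using odd by (metis coprime_commute coprime_mult_right_iff coprime_right_2_iff_odd
      mult_2 numeral_Bit0)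
  ultimately have "4 dvd a * k ^ 2 + b * k + c" using coprime_dvd_mult_right_iff by blast
  then show ?thesis using b' by (intro exI[of _ k]) simp
qed

lemma reducing_shift_prime:
  fixes a b c p E :: int
  assumes "prime p" and "\<not> p dvd a" and "b ^ 2 - 4 * a * c = p ^ 2 * E"
    and "E mod 4 = 0 \<or> E mod 4 = 1"
  shows "\<exists>k. p dvd 2 * a * k + b \<and> p ^ 2 dvd a * k ^ 2 + b * k + c"
  using assms reducing_shift_two[of a b c E] reducing_shift_odd_prime[of p a b c E]
  by (cases "p = 2") auto

lemma primitive_quadratic_root_shift:
  fixes p a b c E :: int and x :: real
  assumes p: "prime p" and not_dvd: "\<not> p dvd a" and a: "a \<noteq> 0"
    and primitive: "gcd a (gcd b c) = 1"
    and root: "of_int a * x ^ 2 + of_int b * x + of_int c = 0"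
    and disc: "b ^ 2 - 4 * a * c = p ^ 2 * E" and E: "E mod 4 = 0 \<or> E mod 4 = 1"
  shows "\<exists>k y. x = of_int p * y + of_int k \<and> primitive_quadratic_root y E"
proof -
  obtain k where "p dvd 2 * a * k + b" and "p ^ 2 dvd a * k ^ 2 + b * k + c"
    using reducing_shift_prime[OF p not_dvd disc E] by blast
  then obtain b' c' where b': "2 * a * k + b = p * b'"
    and c': "a * k ^ 2 + b * k + c = p ^ 2 * c'"
    by (auto elim!: dvdE)
  have p0: "p \<noteq> 0" using p by auto
  define y where "y = (x - of_int k) / of_int p"
  have x: "x = of_int p * y + of_int k" unfolding y_def using p0 by simp
  have "gcd a (gcd b' c') dvd gcd a (gcd b c)"
  proof -
    have b: "b = p * b' - 2 * a * k" and c: "c = p ^ 2 * c' - a * k ^ 2 - b * k"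
      using b' c' by simp_all
    have "gcd a (gcd b' c') dvd a" "gcd a (gcd b' c') dvd b'" "gcd a (gcd b' c') dvd c'"
      by (meson gcd_dvd1 gcd_dvd2 dvd_trans)+
    then have "gcd a (gcd b' c') dvd b" and "gcd a (gcd b' c') dvd c"
      by (subst b, simp, subst c, simp add: b)
    with \<open>gcd a (gcd b' c') dvd a\<close> show ?thesis by simp
  qed
  then have primitive': "gcd a (gcd b' c') = 1" using primitive by simp
  have "of_int p ^ 2 * (of_int a * y ^ 2 + of_int b' * y + of_int c') =
      of_int a * (of_int p * y) ^ 2 + of_int (p * b') * (of_int p * y) +
        (of_int (p ^ 2 * c') :: real)"
    by (simp add: algebra_simps power2_eq_square)
  also have "\<dots> = of_int a * x ^ 2 + of_int b * x + of_int c"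
    unfolding b'[symmetric] c'[symmetric] x by (simp add: algebra_simps power2_eq_square)
  finally have root': "of_int a * y ^ 2 + of_int b' * y + of_int c' = (0 :: real)"
    using root p0 by simp
  have "p ^ 2 * (b' ^ 2 - 4 * a * c') = (2 * a * k + b) ^ 2 - 4 * a * (a * k ^ 2 + b * k + c)"
    unfolding b' c' by (simp add: algebra_simps power2_eq_square)
  also have "\<dots> = p ^ 2 * E"
    using disc by (simp add: algebra_simps power2_eq_square)
  finally have "b' ^ 2 - 4 * a * c' = E" using p0 by simp
  with a primitive' root' have "primitive_quadratic_root y E"
    unfolding primitive_quadratic_root_def
    by (intro exI[of _ a] exI[of _ b'] exI[of _ c']) simp
  with x show ?thesis by blast
qed

lemma primitive_quadratic_root_descent_prime:
  fixes p E :: int and x :: real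
  assumes irrational: "x \<notin> \<rat>" and p: "prime p"
    and root: "primitive_quadratic_root x (p ^ 2 * E)" and E: "E mod 4 = 0 \<or> E mod 4 = 1"
  shows "\<exists>P Q R S y.
           P * S - Q * R = p \<and> primitive_quadratic_root y E \<and> x = mat_act P Q R S y"
proof -
  obtain a b c where a: "a \<noteq> 0" and primitive: "gcd a (gcd b c) = 1"
    and root_abc: "of_int a * x ^ 2 + of_int b * x + of_int c = 0"
    and disc: "b ^ 2 - 4 * a * c = p ^ 2 * E"
    using root unfolding primitive_quadratic_root_def by (elim exE conjE) (rule that)
  show ?thesis
  proof (cases "p dvd a")
    case False
    then obtain k y where "x = of_int p * y + of_int k" "primitive_quadratic_root y E"
      using primitive_quadratic_root_shift[OF p False a primitive root_abc disc E] by blast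
    moreover from this(1) have "x = mat_act p k 0 1 y" by (simp add: mat_act_def)
    moreover have "p * 1 - k * 0 = p" by simp
    ultimately show ?thesis by blast
  next
    case True
    have not_dvd: "\<not> p dvd c"
    proof
      assume "p dvd c"
      moreover have "b ^ 2 = p * (p * E) + 4 * a * c"
        using disc by (simp add: power2_eq_square algebra_simps)
      ultimately have "p dvd b ^ 2" using True by simp
      then have "p dvd b" using prime_dvd_power[OF p] by blast
      with True \<open>p dvd c\<close> have "p dvd gcd a (gcd b c)" by simp
      with primitive p show False by (simp add: prime_int_iff)
    qed
    then have c: "c \<noteq> 0" by auto
    have x0: "x \<noteq> 0" using irrational by auto
    define x' where "x' = - 1 / x"
    have "x ^ 2 * (of_int c * x' ^ 2 + of_int (- b) * x' + of_int a) =
        of_int a * x ^ 2 + of_int b * x + of_int c"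
      unfolding x'_def using x0 by (simp add: field_simps power2_eq_square)
    with root_abc x0 have root_swapped: "of_int c * x' ^ 2 + of_int (- b) * x' + of_int a = 0"
      by simp
    have primitive_swapped: "gcd c (gcd (- b) a) = 1" using primitive by (simp add: ac_simps)
    have disc_swapped: "(- b) ^ 2 - 4 * c * a = p ^ 2 * E" using disc by (simp add: algebra_simps)
    obtain k y where x': "x' = of_int p * y + of_int k" and y: "primitive_quadratic_root y E"
      using primitive_quadratic_root_shift[OF p not_dvd c primitive_swapped root_swapped
          disc_swapped E] by blast
    have "x = - 1 / x'" unfolding x'_def using x0 by simp
    with x' have "x = mat_act 0 (- 1) p k y" by (simp add: mat_act_def)
    moreover have "0 * k - (- 1) * p = p" by simp
    ultimately show ?thesis using y by blast
  qed
qed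

lemma primitive_quadratic_root_descent:
  fixes m D :: int and x :: real
  assumes "m > 0" and "x \<notin> \<rat>" and "primitive_quadratic_root x (m ^ 2 * D)"
    and D: "D mod 4 = 0 \<or> D mod 4 = 1"
  shows "\<exists>P Q R S y. P * S - Q * R = m \<and> y \<notin> \<rat> \<and> primitive_quadratic_root y D \<and>
           x = mat_act P Q R S y"
  using assms(1-3)
proof (induction "nat m" arbitrary: m x rule: less_induct)
  case less
  show ?case
  proof (cases "m = 1")
    case True
    with less.prems show ?thesis
      by (intro exI[of _ 1] exI[of _ 0] exI[of _ 0] exI[of _ 1] exI[of _ x]) (simp add: mat_act_def)
  next
    case False
    with less.prems(1) obtain p where p: "prime p" "p dvd m"
      using prime_factor_int[of m] by auto
    then obtain m' where m: "m = p * m'" by (auto elim: dvdE)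
    have "p > 1" using p prime_gt_1_int by blast
    with less.prems(1) m have m': "m' > 0" "nat m' < nat m"
      by (auto simp: zero_less_mult_iff)
    have "primitive_quadratic_root x (p ^ 2 * (m' ^ 2 * D))"
      using less.prems(3) by (simp add: m power_mult_distrib mult.assoc)
    then obtain P Q R S x' where det: "P * S - Q * R = p"
      and x': "primitive_quadratic_root x' (m' ^ 2 * D)" and x: "x = mat_act P Q R S x'"
      using primitive_quadratic_root_descent_prime[OF less.prems(2) p(1) _ square_mult_mod_4[OF D]]
      by blast
    have "x' \<notin> \<rat>" using less.prems(2) mat_act_rational x by blast
    then obtain P' Q' R' S' y where det': "P' * S' - Q' * R' = m'" and y: "y \<notin> \<rat>"
      "primitive_quadratic_root y D" and x'y: "x' = mat_act P' Q' R' S' y"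
      using less.hyps[OF m'(2) m'(1)] x' by blast
    have "R' \<noteq> 0 \<or> S' \<noteq> 0" using det' m'(1) by auto
    then have "of_int R' * y + of_int S' \<noteq> 0" by (rule mat_act_denominator_nonzero[OF y(1)])
    then have x_y:
      "x = mat_act (P * P' + Q * R') (P * Q' + Q * S') (R * P' + S * R') (R * Q' + S * S') y"
      unfolding x x'y by (rule mat_act_mult)
    have "(P * P' + Q * R') * (R * Q' + S * S') - (P * Q' + Q * S') * (R * P' + S * R') =
        (P * S - Q * R) * (P' * S' - Q' * R')"
      by algebra
    also have "\<dots> = m" using det det' m by simp
    finally show ?thesis using x_y y by blast
  qed
qed

theorem lemma4p42:
  fixes \<beta> :: real and f :: int
  assumes "real_quadratic_irrational \<beta>" and "conductor \<beta> f"
  shows "\<exists>(a::int) (b::int) (c::int) (d::int) (\<alpha>::real).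
           a * d - b * c = f \<and> real_quadratic_irrational \<alpha> \<and> conductor \<alpha> 1 \<and>
           \<beta> = mat_act a b c d \<alpha>"
proof -
  have irrational: "\<beta> \<notin> \<rat>" using assms(1) unfolding real_quadratic_irrational_def by blast
  obtain D0 where f: "f > 0" and D0: "fundamental_discriminant D0"
    and root: "primitive_quadratic_root \<beta> (f ^ 2 * D0)"
    using assms(2) unfolding conductor_iff_primitive_quadratic_root by blast
  obtain a b c d \<alpha> where "a * d - b * c = f" and "\<alpha> \<notin> \<rat>"
    and root_\<alpha>: "primitive_quadratic_root \<alpha> D0" and "\<beta> = mat_act a b c d \<alpha>"
    using primitive_quadratic_root_descent[OF f irrational root fundamental_discriminant_mod_4[OF D0]]
    by blast
  moreover have "conductor \<alpha> 1"
    using D0 root_\<alpha> unfolding conductor_iff_primitive_quadratic_root by auto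
  ultimately show ?thesis using real_quadratic_irrational_if_primitive_quadratic_root by blast
qed

end
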